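(* Let $K\subseteq\mathbb{R}^n$ be a proper cone and $A\in\mathbb{R}^{n\times n}$ nonsingular, $b\in\mathbb{R}^n$. Let $A=U-V$ be a convergent $K$-regular splitting and let $U=F-G$ be a convergent $K$-weak regular splitting of type II such that $VF^{-1}G=GF^{-1}V$. Then for any sequence of positive integers $s(k)\geq 1$, $k=0,1,2,\ldots$, and any initial vector $x_0$, the non-stationary two-stage iteration $$x_{k+1}=(F^{-1}G)^{s(k)}x_{k}+\sum_{j=0}^{s(k)-1}(F^{-1}G)^{j}F^{-1}(Vx_{k}+b),\qquad k=0,1,2,\ldots,$$ converges (to $A^{-1}b$).
   Context: A proper cone $K\subseteq\mathbb{R}^n$ is a closed, convex, pointed, solid cone. For $M\in\mathbb{R}^{n\times n}$, $M\geq_K 0$ means $MK\subseteq K$. A splitting $A=U-V$ (with $U$ nonsingular) is $K$-regular if $U^{-1}\geq_K 0$ and $V\geq_K 0$; it is a $K$-weak regular splitting of type II if $U^{-1}\geq_K 0$ and $VU^{-1}\geq_K 0$. A splitting is convergent if $\rho(U^{-1}V)<1$, $\rho$ denoting spectral radius. *)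

theory Defs
  imports "HOL-Analysis.Analysis"
begin

definition proper_cone :: "(real^'n) set \<Rightarrow> bool" where
  "proper_cone K \<longleftrightarrow> cone K \<and> closed K \<and> convex K \<and>
     K \<inter> uminus ` K = {0} \<and> interior K \<noteq> {}"

definition K_nonneg :: "(real^'n) set \<Rightarrow> real^'n^'n \<Rightarrow> bool" where
  "K_nonneg K M \<longleftrightarrow> (\<lambda>x. M *v x) ` K \<subseteq> K"

definition spec_rad :: "real^'n^'n \<Rightarrow> real" where
  "spec_rad M = Max {cmod z | z. det ((\<chi> i j. (if i = j then z else 0) - complex_of_real (M $ i $ j)) :: complex^'n^'n) = 0}"

primrec matpow :: "real^'n^'n \<Rightarrow> nat \<Rightarrow> real^'n^'n" where
  "matpow M 0 = mat 1"
| "matpow M (Suc k) = M ** matpow M k"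

definition K_regular_splitting :: "(real^'n) set \<Rightarrow> real^'n^'n \<Rightarrow> real^'n^'n \<Rightarrow> real^'n^'n \<Rightarrow> bool" where
  "K_regular_splitting K A U V \<longleftrightarrow> A = U - V \<and> invertible U \<and>
     K_nonneg K (matrix_inv U) \<and> K_nonneg K V"

definition K_weak_regular_splitting_II :: "(real^'n) set \<Rightarrow> real^'n^'n \<Rightarrow> real^'n^'n \<Rightarrow> real^'n^'n \<Rightarrow> bool" where
  "K_weak_regular_splitting_II K A U V \<longleftrightarrow> A = U - V \<and> invertible U \<and>
     K_nonneg K (matrix_inv U) \<and> K_nonneg K (V ** matrix_inv U)"

definition convergent_splitting :: "real^'n^'n \<Rightarrow> real^'n^'n \<Rightarrow> bool" where
  "convergent_splitting U V \<longleftrightarrow> spec_rad (matrix_inv U ** V) < 1"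

end

theory Submission
  imports Defs "HOL-Computational_Algebra.Fundamental_Theorem_Algebra"
begin

(* Let y = A^-1 b, Q = G F^-1 and W = V F^-1. Conjugating by F turns the error recursion
   into F (x (k+1) - y) = R_(s k) F (x k - y) with R_s = Q^s + (sum_(j<s) Q^j) W, and every R_s
   maps K into K. For e in the interior of K put w = F A^-1 e. The Neumann series of the two
   splittings give w - e in K, and (I - Q - W) w = e gives w - e - R_s w = sum_(0<j<s) Q^j e in K
   for s >= 1. Hence R_s w <= theta w in the order of K for all s >= 1 with a single theta < 1,
   so the transformed errors stay in order intervals [-c theta^k w, c theta^k w], which shrink
   to 0 because K is closed and pointed. *)

section \<open>Matrix algebra\<close>

lemma matrix_add_rdistrib: "(A + B) ** C = A ** C + B ** (C :: 'a::semiring_1^'n^'m)"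
  by (simp add: matrix_matrix_mult_def vec_eq_iff sum.distrib distrib_right)

lemma matrix_diff_ldistrib: "A ** (B - C) = A ** B - A ** (C :: 'a::ring_1^'n^'m)"
  by (simp add: matrix_matrix_mult_def vec_eq_iff sum_subtractf right_diff_distrib)

lemma matrix_diff_rdistrib: "(A - B) ** C = A ** C - B ** (C :: 'a::ring_1^'n^'m)"
  by (simp add: matrix_matrix_mult_def vec_eq_iff sum_subtractf left_diff_distrib)

lemma matrix_sum_ldistrib: "A ** (\<Sum>i\<in>S. B i) = (\<Sum>i\<in>S. A ** B i :: 'a::semiring_1^'n^'m)"
  by (induct S rule: infinite_finite_induct) (simp_all add: matrix_add_ldistrib)

lemma matrix_sum_rdistrib: "(\<Sum>i\<in>S. A i) ** B = (\<Sum>i\<in>S. A i ** B :: 'a::semiring_1^'n^'m)"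
  by (induct S rule: infinite_finite_induct) (simp_all add: matrix_add_rdistrib)

lemma matrix_vector_sum_rdistrib: "(\<Sum>i\<in>S. A i) *v x = (\<Sum>i\<in>S. A i *v x :: 'a::semiring_1^'m)"
  by (induct S rule: infinite_finite_induct) (simp_all add: matrix_vector_mult_add_rdistrib)

lemma mat_add: "mat (a + b) = mat a + (mat b :: 'a::semiring_1^'n^'n)"
  by (simp add: vec_eq_iff mat_def)

lemma mat_uminus: "mat (- a) = - (mat a :: 'a::ring_1^'n^'n)"
  by (simp add: vec_eq_iff mat_def)

lemma mat_matrix_mult: "mat a ** B = (\<chi> i j. a * B $ i $ j :: 'a::semiring_1^'n^'m)"
  by (auto simp: vec_eq_iff mat_def matrix_matrix_mult_def if_distrib if_distribR sum.delta'
      cong: if_cong)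

lemma matrix_mult_mat: "B ** mat a = (\<chi> i j. B $ i $ j * a :: 'a::semiring_1^'n^'m)"
  by (auto simp: vec_eq_iff mat_def matrix_matrix_mult_def if_distrib if_distribR sum.delta'
      cong: if_cong)

lemma mat_mult_commute: "mat a ** B = B ** (mat a :: 'a::comm_semiring_1^'n^'n)"
  by (simp add: mat_matrix_mult matrix_mult_mat mult.commute)

lemma mat_mult_mat: "mat a ** mat b = (mat (a * b) :: 'a::semiring_1^'n^'n)"
  unfolding mat_matrix_mult by (simp add: vec_eq_iff mat_def)

lemma mat_vector_mult: "mat a *v x = a *s (x :: 'a::semiring_1^'n)"
  by (auto simp: vec_eq_iff mat_def matrix_vector_mult_def if_distrib if_distribR sum.delta'
      cong: if_cong)

lemma matrix_vector_mult_axis: "(A *v axis j 1) $ i = (A $ i $ j :: 'a::semiring_1)"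
  by (auto simp: matrix_vector_mult_def axis_def if_distrib if_distribR sum.delta' cong: if_cong)

section \<open>Polynomials of a matrix\<close>

text \<open>\<open>matpow\<close> is defined for real matrices only; powers of complex matrices are written
  \<open>poly_mat (monom 1 k) M\<close>.\<close>
definition poly_mat :: "'a::comm_ring_1 poly \<Rightarrow> 'a^'n^'n \<Rightarrow> 'a^'n^'n" where
  "poly_mat p M = fold_coeffs (\<lambda>a B. mat a + M ** B) p 0"

lemma poly_mat_0 [simp]: "poly_mat 0 M = 0"
  by (simp add: poly_mat_def)

lemma poly_mat_pCons [simp]: "poly_mat (pCons a p) M = mat a + M ** poly_mat p M"
  by (cases "p = 0 \<and> a = 0") (auto simp: poly_mat_def)

lemma poly_mat_1 [simp]: "poly_mat 1 M = mat 1"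
  by (simp add: one_pCons)

lemma poly_mat_add: "poly_mat (p + q) M = poly_mat p M + poly_mat q M"
proof (induct p arbitrary: q)
  case (pCons a p)
  then show ?case
    by (cases q) (simp add: mat_add matrix_add_ldistrib algebra_simps)
qed simp

lemma poly_mat_diff: "poly_mat (p - q) M = poly_mat p M - poly_mat q M"
  using poly_mat_add[of "p - q" q M] by (simp add: eq_diff_eq)

lemma poly_mat_smult: "poly_mat (smult c p) M = mat c ** poly_mat p M"
proof (induct p)
  case (pCons a p)
  have "mat c ** (M ** poly_mat p M) = M ** (mat c ** poly_mat p M)"
    by (simp add: matrix_mul_assoc mat_mult_commute[of c M])
  with pCons show ?case
    by (simp add: matrix_add_ldistrib mat_mult_mat)
qed simp

lemma poly_mat_mult: "poly_mat (p * q) M = poly_mat p M ** poly_mat q M"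
  by (induct p) (simp_all add: poly_mat_add poly_mat_smult matrix_add_rdistrib matrix_mul_assoc)

lemma poly_mat_sum: "poly_mat (\<Sum>i\<in>S. p i) M = (\<Sum>i\<in>S. poly_mat (p i) M)"
  by (induct S rule: infinite_finite_induct) (simp_all add: poly_mat_add)

lemma poly_mat_linear: "poly_mat [:- z, 1:] M = M - mat z"
  by (simp add: mat_uminus)

lemma poly_mat_monom: "poly_mat (monom c k) M = mat c ** poly_mat (monom 1 k) M"
  using poly_mat_smult[of c "monom 1 k" M] by (simp add: smult_monom)

lemma poly_mat_monom_Suc:
  "poly_mat (monom 1 (Suc k)) M = M ** poly_mat (monom 1 k) M"
  "poly_mat (monom 1 (Suc k)) M = poly_mat (monom 1 k) M ** M"
proof -
  have "monom 1 (Suc k) = monom (1::'a) 1 * monom 1 k" "monom 1 (Suc k) = monom 1 k * monom (1::'a) 1"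
    by (simp_all add: mult_monom)
  moreover have "poly_mat (monom 1 1) M = M"
    by (simp add: monom_Suc)
  ultimately show
    "poly_mat (monom 1 (Suc k)) M = M ** poly_mat (monom 1 k) M"
    "poly_mat (monom 1 (Suc k)) M = poly_mat (monom 1 k) M ** M"
    by (metis poly_mat_mult)+
qed

lemma poly_mat_eigenvector:
  fixes M :: "'a::field^'n^'n"
  assumes "M *v v = z *s v"
  shows "poly_mat p M *v v = poly p z *s v"
proof (induct p)
  case (pCons a p)
  have "poly_mat (pCons a p) M *v v = a *s v + M *v (poly p z *s v)"
    by (simp add: matrix_vector_mult_add_rdistrib mat_vector_mult pCons(2)
        flip: matrix_vector_mul_assoc)
  also have "\<dots> = poly (pCons a p) z *s v"
    by (simp add: vector_scalar_commute assms vec_eq_iff algebra_simps)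
  finally show ?case .
qed simp

lemma vec_family_dependent:
  fixes f :: "nat \<Rightarrow> 'a::field^'n"
  obtains c where "\<exists>i\<le>CARD('n). c i \<noteq> 0" "(\<Sum>i\<le>CARD('n). c i *s f i) = 0"
proof (cases "inj_on f {..CARD('n)}")
  case True
  define S where "S = f ` {..CARD('n)}"
  have "card S = Suc CARD('n)"
    using True by (simp add: S_def card_image)
  then have "vec.dependent S"
    using vec.independent_bound_general[of S] dim_subset_UNIV_cart_gen[of S]
    by (metis Suc_n_not_le_n le_trans)
  then obtain u where u: "\<exists>v\<in>S. u v \<noteq> 0" "(\<Sum>v\<in>S. u v *s v) = 0"
    using vec.dependent_finite[of S] by (auto simp: S_def)
  have "(\<Sum>i\<le>CARD('n). u (f i) *s f i) = (\<Sum>v\<in>S. u v *s v)"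
    unfolding S_def by (rule sum.reindex[OF True, symmetric, unfolded comp_def])
  with u show ?thesis
    by (intro that[of "u \<circ> f"]) (auto simp: S_def)
next
  case False
  then obtain i j where ij: "i \<le> CARD('n)" "i \<noteq> j" "f i = f j" "j \<le> CARD('n)"
    unfolding inj_on_def by auto
  define c :: "nat \<Rightarrow> 'a" where "c k = (if k = i then 1 else 0) - (if k = j then 1 else 0)" for k
  have "c k *s f k = (if k = i then f k else 0) - (if k = j then f k else 0)" for k
    by (simp add: c_def vector_sub_rdistrib)
  then have "(\<Sum>k\<le>CARD('n). c k *s f k) = f i - f j"
    using ij by (simp add: sum_subtractf)
  with ij show ?thesis
    by (intro that[of c]) (auto simp: c_def)
qed

lemma poly_mat_annihilates_vector:
  fixes M :: "'a::field^'n^'n"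
  obtains q where "q \<noteq> 0" "poly_mat q M *v y = 0"
proof -
  obtain c where c: "\<exists>i\<le>CARD('n). c i \<noteq> 0"
      "(\<Sum>i\<le>CARD('n). c i *s (poly_mat (monom 1 i) M *v y)) = 0"
    by (rule vec_family_dependent)
  define q :: "'a poly" where "q = (\<Sum>i\<le>CARD('n). monom (c i) i)"
  from c(1) obtain i where "i \<le> CARD('n)" "c i \<noteq> 0"
    by blast
  then have "coeff q i \<noteq> 0"
    by (simp add: q_def coeff_sum coeff_monom)
  then have "q \<noteq> 0"
    by auto
  have "poly_mat (monom (c i) i) M *v y = c i *s (poly_mat (monom 1 i) M *v y)" for i
    using poly_mat_monom[of "c i" i M] by (simp add: mat_vector_mult flip: matrix_vector_mul_assoc)
  then have "poly_mat q M *v y = 0"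
    using c(2) by (simp add: q_def poly_mat_sum matrix_vector_sum_rdistrib)
  with \<open>q \<noteq> 0\<close> show ?thesis
    by (rule that)
qed

lemma poly_mat_annihilates:
  fixes M :: "'a::field^'n^'n"
  obtains q where "q \<noteq> 0" "poly_mat q M = 0"
proof -
  have "\<forall>j. \<exists>q. q \<noteq> 0 \<and> poly_mat q M *v axis j 1 = 0"
    by (meson poly_mat_annihilates_vector)
  then obtain q where q: "\<And>j. q j \<noteq> 0" "\<And>j. poly_mat (q j) M *v axis j 1 = 0"
    by metis
  define Q where "Q = (\<Prod>j\<in>UNIV. q j)"
  have "poly_mat Q M *v axis j 1 = 0" for j
  proof -
    have "Q = (\<Prod>k\<in>UNIV - {j}. q k) * q j"
      by (simp add: Q_def prod.remove[of UNIV j] mult.commute)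
    then show ?thesis
      by (simp add: poly_mat_mult q(2) flip: matrix_vector_mul_assoc)
  qed
  then have "poly_mat Q M = 0"
    by (metis matrix_vector_mult_axis vec_eq_iff zero_index)
  moreover have "Q \<noteq> 0"
    using q(1) by (simp add: Q_def)
  ultimately show ?thesis
    using that by blast
qed

lemma det_mat_minus_eq_0_iff:
  fixes X :: "'a::field^'n^'n"
  shows "det (mat z - X) = 0 \<longleftrightarrow> (\<exists>v. v \<noteq> 0 \<and> X *v v = z *s v)"
proof -
  have "det (mat z - X) = 0 \<longleftrightarrow> \<not> (\<forall>v. (mat z - X) *v v = 0 \<longrightarrow> v = 0)"
    using invertible_det_nz[of "mat z - X"] invertible_left_inverse[of "mat z - X"]
      matrix_left_invertible_ker[of "mat z - X"] by blast
  also have "\<dots> \<longleftrightarrow> (\<exists>v. v \<noteq> 0 \<and> X *v v = z *s v)"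
    by (auto simp: matrix_vector_mult_diff_rdistrib mat_vector_mult; metis)
  finally show ?thesis .
qed

lemma finite_eigenvalues:
  fixes X :: "'a::field^'n^'n"
  shows "finite {z. \<exists>v. v \<noteq> 0 \<and> X *v v = z *s v}"
proof -
  obtain q where q: "q \<noteq> 0" "poly_mat q X = 0"
    using poly_mat_annihilates by blast
  have "poly q z = 0" if "v \<noteq> 0" "X *v v = z *s v" for z v
    using poly_mat_eigenvector[OF that(2), of q] q(2) that(1) by simp
  then have "{z. \<exists>v. v \<noteq> 0 \<and> X *v v = z *s v} \<subseteq> {z. poly q z = 0}"
    by blast
  then show ?thesis
    using poly_roots_finite[OF q(1)] finite_subset by blast
qed

lemma spec_rad_eq_Max_eigenvalues:
  "spec_rad M = Max {cmod z | z. \<exists>v. v \<noteq> 0 \<and> map_matrix complex_of_real M *v v = z *s v}"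
proof -
  have "(\<chi> i j. (if i = j then z else 0) - complex_of_real (M $ i $ j)) = mat z - map_matrix of_real M"
    for z
    by (simp add: vec_eq_iff mat_def)
  then show ?thesis
    by (simp add: spec_rad_def det_mat_minus_eq_0_iff)
qed

lemma eigenvalue_cmod_le_spec_rad:
  assumes "map_matrix complex_of_real M *v v = z *s v" "v \<noteq> 0"
  shows "cmod z \<le> spec_rad M"
proof -
  have "finite {cmod z | z. \<exists>v. v \<noteq> 0 \<and> map_matrix complex_of_real M *v v = z *s v}"
    using finite_imageI[OF finite_eigenvalues[of "map_matrix complex_of_real M"], of cmod] by (metis image_Collect)
  then show ?thesis
    unfolding spec_rad_eq_Max_eigenvalues using assms by (auto intro: Max_ge)
qed

section \<open>Spectral radius below one\<close>

lemma linear_recurrence_tendsto_zero: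
  fixes a b :: "nat \<Rightarrow> complex"
  assumes z: "cmod z < 1" and b: "b \<longlonglongrightarrow> 0" and a: "\<And>k. a (Suc k) = z * a k + b k"
  shows "a \<longlonglongrightarrow> 0"
proof (rule LIMSEQ_I)
  fix \<epsilon> :: real
  assume "0 < \<epsilon>"
  define r where "r = cmod z"
  have r: "0 \<le> r" "r < 1"
    using z by (auto simp: r_def)
  obtain N where N: "\<And>k. k \<ge> N \<Longrightarrow> norm (b k) < (1 - r) * \<epsilon> / 2"
    using LIMSEQ_D[OF b, of "(1 - r) * \<epsilon> / 2"] r \<open>0 < \<epsilon>\<close> by auto
  have bound: "norm (a (N + m)) \<le> r ^ m * norm (a N) + \<epsilon> / 2" for m
  proof (induct m)
    case (Suc m)
    have "norm (a (N + Suc m)) \<le> r * norm (a (N + m)) + norm (b (N + m))"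
      using norm_triangle_ineq[of "z * a (N + m)"] by (simp add: a norm_mult r_def)
    also have "\<dots> \<le> r * (r ^ m * norm (a N) + \<epsilon> / 2) + (1 - r) * \<epsilon> / 2"
      using Suc N[of "N + m"] r by (intro add_mono mult_left_mono) auto
    also have "\<dots> = r ^ Suc m * norm (a N) + \<epsilon> / 2"
      by (simp add: field_simps)
    finally show ?case .
  qed (use \<open>0 < \<epsilon>\<close> in simp)
  have "(\<lambda>m. r ^ m * norm (a N)) \<longlonglongrightarrow> 0"
    using r by (intro tendsto_mult_left_zero LIMSEQ_power_zero) auto
  then obtain M where M: "\<And>m. m \<ge> M \<Longrightarrow> r ^ m * norm (a N) < \<epsilon> / 2"
    using LIMSEQ_D[of _ 0 "\<epsilon> / 2"] \<open>0 < \<epsilon>\<close> by fastforce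
  show "\<exists>K. \<forall>k\<ge>K. norm (a k - 0) < \<epsilon>"
  proof (intro exI allI impI)
    fix k
    assume "k \<ge> N + M"
    then have "norm (a (N + (k - N))) < \<epsilon>"
      using bound[of "k - N"] M[of "k - N"] by fastforce
    then show "norm (a k - 0) < \<epsilon>"
      using \<open>k \<ge> N + M\<close> by simp
  qed
qed

lemma matrix_power_vector_tendsto_zeroI:
  fixes M :: "complex^'n^'n"
  assumes "cmod z < 1" and lim: "(\<lambda>k. poly_mat (monom 1 k) M *v ((M - mat z) *v y)) \<longlonglongrightarrow> 0"
  shows "(\<lambda>k. poly_mat (monom 1 k) M *v y) \<longlonglongrightarrow> 0"
proof (rule vec_tendstoI)
  fix i
  have "(\<lambda>k. (poly_mat (monom 1 k) M *v y) $ i) \<longlonglongrightarrow> 0"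
  proof (rule linear_recurrence_tendsto_zero[OF \<open>cmod z < 1\<close>])
    show "(\<lambda>k. (poly_mat (monom 1 k) M *v ((M - mat z) *v y)) $ i) \<longlonglongrightarrow> 0"
      using tendsto_vec_nth[OF lim, of i] by simp
    show "(poly_mat (monom 1 (Suc k)) M *v y) $ i
        = z * (poly_mat (monom 1 k) M *v y) $ i + (poly_mat (monom 1 k) M *v ((M - mat z) *v y)) $ i"
      for k
      by (simp add: poly_mat_monom_Suc(2) matrix_vector_mult_diff_distrib
          matrix_vector_mult_diff_rdistrib mat_vector_mult vector_scalar_commute
          flip: matrix_vector_mul_assoc)
  qed
  then show "(\<lambda>k. (poly_mat (monom 1 k) M *v y) $ i) \<longlonglongrightarrow> 0 $ i"
    by simp
qed

text \<open>Write
  \<open>p = (X - z) r\<close>. If \<open>r(M) y \<noteq> 0\<close>, it is an eigenvector of \<open>M\<close> for \<open>z\<close>, so \<open>|z| < 1\<close>, and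
  \<open>r\<close> annihilates \<open>(M - z) y\<close>.\<close>
lemma matrix_power_vector_tendsto_zero:
  fixes M :: "complex^'n^'n"
  assumes eig: "\<And>z v. v \<noteq> 0 \<Longrightarrow> M *v v = z *s v \<Longrightarrow> cmod z < 1"
    and "p \<noteq> 0" "poly_mat p M *v y = 0"
  shows "(\<lambda>k. poly_mat (monom 1 k) M *v y) \<longlonglongrightarrow> 0"
  using assms(2,3)
proof (induct "degree p" arbitrary: p y rule: less_induct)
  case less
  show ?case
  proof (cases "degree p = 0")
    case True
    then obtain c where "p = [:c:]"
      by (rule degree_eq_zeroE)
    with less.prems have "y = 0"
      by (simp add: mat_vector_mult)
    then show ?thesis by simp
  next
    case False
    then obtain z where "poly p z = 0"
      using fundamental_theorem_of_algebra[of p] constant_degree[of p] by auto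
    then obtain r where p: "p = [:- z, 1:] * r"
      by (metis dvdE poly_eq_0_iff_dvd)
    with less.prems(1) have "r \<noteq> 0" by auto
    then have IH: "(\<lambda>k. poly_mat (monom 1 k) M *v u) \<longlonglongrightarrow> 0" if "poly_mat r M *v u = 0" for u
      using less.hyps[of r u] that unfolding p by (subst (asm) degree_mult_eq) auto
    have "poly_mat p M = (M - mat z) ** poly_mat r M"
      by (simp only: p poly_mat_mult poly_mat_linear)
    moreover have "poly_mat p M = poly_mat r M ** (M - mat z)"
      by (simp only: p mult.commute[of "[:- z, 1:]" r] poly_mat_mult poly_mat_linear)
    ultimately have factor: "(M - mat z) *v (poly_mat r M *v y) = 0"
        "poly_mat r M *v ((M - mat z) *v y) = 0"
      using less.prems(2) by (simp_all add: matrix_vector_mul_assoc)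
    show ?thesis
    proof (cases "poly_mat r M *v y = 0")
      case False
      from factor(1) have "M *v (poly_mat r M *v y) = z *s (poly_mat r M *v y)"
        by (simp add: matrix_vector_mult_diff_rdistrib mat_vector_mult)
      with False have "cmod z < 1"
        by (rule eig)
      then show ?thesis
        using IH[OF factor(2)] by (rule matrix_power_vector_tendsto_zeroI)
    qed (rule IH)
  qed
qed

lemma map_matrix_of_real_mult:
  "map_matrix of_real (A ** B) = map_matrix of_real A ** (map_matrix of_real B :: 'a::real_algebra_1^'n^'m)"
  by (simp add: matrix_matrix_mult_def vec_eq_iff)

lemma map_matrix_of_real_matpow:
  "map_matrix complex_of_real (matpow M k) = poly_mat (monom 1 k) (map_matrix of_real M)"
proof (induct k)
  case 0
  then show ?case by (simp add: vec_eq_iff mat_def)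
next
  case (Suc k)
  then show ?case by (simp add: map_matrix_of_real_mult poly_mat_monom_Suc(1))
qed

lemma matpow_tendsto_zero:
  assumes "spec_rad M < 1"
  shows "(\<lambda>k. matpow M k) \<longlonglongrightarrow> 0"
proof -
  let ?C = "map_matrix complex_of_real M"
  obtain q where q: "q \<noteq> 0" "poly_mat q ?C = 0"
    using poly_mat_annihilates by blast
  have eig: "cmod z < 1" if "v \<noteq> 0" "?C *v v = z *s v" for z v
    using eigenvalue_cmod_le_spec_rad[OF that(2,1)] assms by simp
  have "(\<lambda>k. poly_mat (monom 1 k) ?C *v y) \<longlonglongrightarrow> 0" for y
    by (rule matrix_power_vector_tendsto_zero[where p = q]) (use eig q in auto)
  then have "(\<lambda>k. (map_matrix complex_of_real (matpow M k) *v axis j 1) $ i) \<longlonglongrightarrow> 0" for i j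
    unfolding map_matrix_of_real_matpow by (intro tendsto_vec_nth[where a = 0, simplified])
  then have "(\<lambda>k. complex_of_real (matpow M k $ i $ j)) \<longlonglongrightarrow> of_real 0" for i j
    by (simp add: matrix_vector_mult_axis)
  then have "(\<lambda>k. matpow M k $ i $ j) \<longlonglongrightarrow> 0" for i j
    unfolding tendsto_of_real_iff .
  then show ?thesis
    by (intro vec_tendstoI) simp
qed

section \<open>Inverses and the Neumann series\<close>

lemma matrix_inv_right: "invertible A \<Longrightarrow> A ** matrix_inv A = mat 1"
  unfolding invertible_def matrix_inv_def by (rule someI2_ex) auto

lemma matrix_inv_left: "invertible A \<Longrightarrow> matrix_inv A ** A = mat 1"
  unfolding invertible_def matrix_inv_def by (rule someI2_ex) auto

lemma matrix_inv_unique: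
  fixes A B :: "'a::field^'n^'n"
  assumes "B ** A = mat 1"
  shows "matrix_inv A = B"
proof -
  have "invertible A"
    using assms invertible_left_inverse by blast
  then have "B = B ** (A ** matrix_inv A)"
    by (simp add: matrix_inv_right)
  then show ?thesis
    by (simp add: assms matrix_mul_assoc)
qed

lemma matpow_commute: "matpow X k ** X = X ** matpow X k"
  by (induct k) (simp_all flip: matrix_mul_assoc)

lemma matpow_similar:
  assumes "F ** Fi = mat 1" "Fi ** F = mat 1"
  shows "matpow (F ** P ** Fi) k = F ** matpow P k ** Fi"
proof (induct k)
  case (Suc k)
  have "F ** P ** Fi ** (F ** matpow P k ** Fi) = F ** P ** (Fi ** F) ** matpow P k ** Fi"
    by (simp add: matrix_mul_assoc)
  then show ?case
    by (simp add: Suc assms(2) matrix_mul_assoc)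
qed (simp add: assms(1))

lemma sum_matpow_mult_id_minus: "(\<Sum>j<s. matpow X j) ** (mat 1 - X) = mat 1 - matpow X s"
proof (induct s)
  case (Suc s)
  have "(\<Sum>j<Suc s. matpow X j) ** (mat 1 - X)
      = (\<Sum>j<s. matpow X j) ** (mat 1 - X) + matpow X s ** (mat 1 - X)"
    by (simp add: matrix_add_rdistrib)
  also have "\<dots> = (mat 1 - matpow X s) + (matpow X s - matpow X (Suc s))"
    by (simp only: Suc) (simp add: matrix_diff_ldistrib matpow_commute)
  finally show ?case
    by simp
qed simp

lemma tendsto_matrix_mult:
  fixes A :: "'b \<Rightarrow> real^'n^'m" and B :: "'b \<Rightarrow> real^'p^'n"
  assumes "(A \<longlongrightarrow> A') F" "(B \<longlongrightarrow> B') F"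
  shows "((\<lambda>k. A k ** B k) \<longlongrightarrow> A' ** B') F"
  unfolding matrix_matrix_mult_def
  by (intro vec_tendstoI) (simp add: tendsto_sum tendsto_mult tendsto_vec_nth assms)

lemma tendsto_matrix_vector_mult:
  fixes A :: "'b \<Rightarrow> real^'n^'m"
  assumes "(A \<longlongrightarrow> A') F" "(x \<longlongrightarrow> x') F"
  shows "((\<lambda>k. A k *v x k) \<longlongrightarrow> A' *v x') F"
  unfolding matrix_vector_mult_def
  by (intro vec_tendstoI) (simp add: tendsto_sum tendsto_mult tendsto_vec_nth assms)

lemma matpow_similar_tendsto_zero:
  assumes "F ** Fi = mat 1" "Fi ** F = mat 1" "(\<lambda>k. matpow P k) \<longlonglongrightarrow> 0"
  shows "(\<lambda>k. matpow (F ** P ** Fi) k) \<longlonglongrightarrow> 0"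
  using tendsto_matrix_mult[OF tendsto_matrix_mult[OF tendsto_const assms(3)] tendsto_const,
      of F Fi]
  by (simp add: matpow_similar[OF assms(1,2)])

lemma invertible_id_minus:
  fixes X :: "real^'n^'n"
  assumes "(\<lambda>k. matpow X k) \<longlonglongrightarrow> 0"
  shows "invertible (mat 1 - X)"
proof -
  have "x = 0" if "(mat 1 - X) *v x = 0" for x
  proof -
    have "X *v x = x"
      using that by (simp add: matrix_vector_mult_diff_rdistrib)
    then have "matpow X k *v x = x" for k
      by (induct k) (simp_all flip: matrix_vector_mul_assoc)
    then have "(\<lambda>k. x) \<longlonglongrightarrow> 0"
      using tendsto_matrix_vector_mult[OF assms tendsto_const, of x] by simp
    then show "x = 0"
      by (simp add: LIMSEQ_const_iff)
  qed
  then show ?thesis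
    using invertible_left_inverse matrix_left_invertible_ker by blast
qed

lemma sum_matpow_tendsto_inverse:
  fixes X :: "real^'n^'n"
  assumes "(\<lambda>k. matpow X k) \<longlonglongrightarrow> 0"
  shows "(\<lambda>N. \<Sum>j<N. matpow X j) \<longlonglongrightarrow> matrix_inv (mat 1 - X)"
proof -
  have "(\<Sum>j<N. matpow X j) = (mat 1 - matpow X N) ** matrix_inv (mat 1 - X)" for N
    by (metis sum_matpow_mult_id_minus matrix_mul_assoc matrix_mul_rid
        matrix_inv_right[OF invertible_id_minus[OF assms]])
  moreover have "(\<lambda>N. (mat 1 - matpow X N) ** matrix_inv (mat 1 - X))
      \<longlonglongrightarrow> (mat 1 - 0) ** matrix_inv (mat 1 - X)"
    by (intro tendsto_matrix_mult tendsto_diff tendsto_const assms)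
  ultimately show ?thesis
    by simp
qed

section \<open>Cones\<close>

lemma proper_cone_imp_convex_cone: "proper_cone K \<Longrightarrow> convex_cone K"
  unfolding proper_cone_def convex_cone_def conic_def cone_def
  by (metis interior_subset subset_empty)

lemma convex_cone_sum: "convex_cone K \<Longrightarrow> (\<And>i. i \<in> S \<Longrightarrow> f i \<in> K) \<Longrightarrow> sum f S \<in> K"
  by (induct S rule: infinite_finite_induct) (auto simp: convex_cone_iff)

lemma K_nonnegD: "K_nonneg K M \<Longrightarrow> v \<in> K \<Longrightarrow> M *v v \<in> K"
  unfolding K_nonneg_def by blast

lemma K_nonneg_mult: "K_nonneg K A \<Longrightarrow> K_nonneg K B \<Longrightarrow> K_nonneg K (A ** B)"
  unfolding K_nonneg_def by (auto simp flip: matrix_vector_mul_assoc)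

lemma K_nonneg_matpow: "K_nonneg K X \<Longrightarrow> K_nonneg K (matpow X k)"
  by (induct k) (simp_all add: K_nonneg_mult, simp add: K_nonneg_def)

lemma K_nonneg_sum:
  "convex_cone K \<Longrightarrow> (\<And>i. i \<in> S \<Longrightarrow> K_nonneg K (M i)) \<Longrightarrow> K_nonneg K (\<Sum>i\<in>S. M i)"
  unfolding K_nonneg_def by (auto simp: matrix_vector_sum_rdistrib intro!: convex_cone_sum)

lemma K_nonneg_add:
  "convex_cone K \<Longrightarrow> K_nonneg K A \<Longrightarrow> K_nonneg K B \<Longrightarrow> K_nonneg K (A + B)"
  unfolding K_nonneg_def by (auto simp: matrix_vector_mult_add_rdistrib intro: convex_cone_add)

lemma matrix_inv_id_minus_ge:
  assumes K: "convex_cone K" "closed K" and X: "K_nonneg K X" "(\<lambda>k. matpow X k) \<longlonglongrightarrow> 0"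
    and "v \<in> K"
  shows "matrix_inv (mat 1 - X) *v v - v \<in> K"
proof -
  let ?Y = "matrix_inv (mat 1 - X)"
  have "K_nonneg K (\<Sum>j<N. matpow X j)" for N
    by (intro K_nonneg_sum K(1) K_nonneg_matpow X(1))
  then have "(\<Sum>j<N. matpow X j) *v v \<in> K" for N
    using \<open>v \<in> K\<close> by (rule K_nonnegD)
  moreover have "(\<lambda>N. (\<Sum>j<N. matpow X j) *v v) \<longlonglongrightarrow> ?Y *v v"
    by (intro tendsto_matrix_vector_mult sum_matpow_tendsto_inverse X(2) tendsto_const)
  ultimately have "?Y *v v \<in> K"
    using closed_sequentially[OF K(2), of "\<lambda>N. (\<Sum>j<N. matpow X j) *v v"] by blast
  moreover have "?Y *v v - v = X *v (?Y *v v)"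
  proof -
    have "(mat 1 - X) *v (?Y *v v) = v"
      using matrix_inv_right[OF invertible_id_minus[OF X(2)]] by (simp add: matrix_vector_mul_assoc)
    then show ?thesis
      by (simp add: matrix_vector_mult_diff_rdistrib algebra_simps)
  qed
  ultimately show ?thesis
    using X(1) by (simp add: K_nonnegD)
qed

lemma interior_convex_cone_add:
  fixes K :: "'a::real_normed_vector set"
  assumes "convex_cone K" "e \<in> interior K" "u \<in> K"
  shows "e + u \<in> interior K"
proof -
  obtain r where r: "r > 0" "ball e r \<subseteq> K"
    using assms(2) mem_interior by blast
  have "y \<in> K" if "y \<in> ball (e + u) r" for y
  proof -
    have "y - u \<in> ball e r"
      using that by (simp add: dist_norm algebra_simps)
    then have "y - u \<in> K"
      using r(2) by blast
    from convex_cone_add[OF assms(1) this assms(3)] show ?thesis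
      by simp
  qed
  then show ?thesis
    using r(1) mem_interior by blast
qed

lemma interior_convex_cone_absorbs:
  fixes K :: "'a::real_normed_vector set"
  assumes "convex_cone K" "e \<in> interior K"
  obtains c where "c > 1" "c *\<^sub>R e - v \<in> K" "c *\<^sub>R e + v \<in> K"
proof -
  obtain r where r: "r > 0" "ball e r \<subseteq> K"
    using assms(2) mem_interior by blast
  define c where "c = norm v / r + 2"
  have "norm v / r \<ge> 0"
    using r(1) by simp
  then have c: "c > 1"
    by (simp add: c_def)
  have "norm v < c * r"
    using r(1) by (simp add: c_def distrib_right)
  with c have "norm v / c < r"
    by (simp add: divide_less_eq mult.commute)
  then have "norm ((1 / c) *\<^sub>R v) < r"
    using c by simp
  then have "e - (1 / c) *\<^sub>R v \<in> K" "e + (1 / c) *\<^sub>R v \<in> K"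
    using r(2) by (auto simp: dist_norm)
  then have "c *\<^sub>R (e - (1 / c) *\<^sub>R v) \<in> K" "c *\<^sub>R (e + (1 / c) *\<^sub>R v) \<in> K"
    using c(1) assms(1) by (auto intro: convex_cone_scaleR)
  with c(1) show ?thesis
    by (intro that) (auto simp: scaleR_diff_right scaleR_add_right)
qed

lemma closed_pointed_cone_sphere_gap:
  fixes K :: "'a::euclidean_space set"
  assumes "closed K" "K \<noteq> {}" "K \<inter> uminus ` K = {0}"
  obtains \<delta> where "\<delta> > 0" "\<And>d. norm d = 1 \<Longrightarrow> \<delta> \<le> max (infdist d K) (infdist (- d) K)"
proof -
  define h where "h d = max (infdist d K) (infdist (- d) K)" for d :: 'a
  have "continuous_on (sphere 0 1) h"
    unfolding h_def by (intro continuous_on_max continuous_on_infdist continuous_on_id continuous_on_minus)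
  then obtain d0 where d0: "d0 \<in> sphere 0 1" "\<And>d. d \<in> sphere 0 1 \<Longrightarrow> h d0 \<le> h d"
    using continuous_attains_inf[OF compact_sphere, of 0 1 h] by auto
  have "h d0 > 0"
  proof (rule ccontr)
    assume "\<not> h d0 > 0"
    then have "infdist d0 K = 0" "infdist (- d0) K = 0"
      using infdist_nonneg[of d0 K] infdist_nonneg[of "- d0" K] by (auto simp: h_def)
    then have "d0 \<in> K" "- d0 \<in> K"
      using in_closed_iff_infdist_zero[OF assms(1,2)] by blast+
    then have "d0 \<in> K \<inter> uminus ` K"
      using image_eqI[of d0 uminus "- d0" K] by simp
    then show False
      using assms(3) d0(1) by auto
  qed
  moreover have "h d0 \<le> max (infdist d K) (infdist (- d) K)" if "norm d = 1" for d
    using d0(2)[of d] that by (simp add: h_def)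
  ultimately show ?thesis
    by (rule that)
qed

lemma pointed_cone_order_interval_bounded:
  fixes K :: "'a::euclidean_space set"
  assumes "convex_cone K" "closed K" "K \<inter> uminus ` K = {0}"
  obtains C where "\<And>t v. 0 \<le> t \<Longrightarrow> t *\<^sub>R w - v \<in> K \<Longrightarrow> t *\<^sub>R w + v \<in> K \<Longrightarrow> norm v \<le> t * C"
proof -
  obtain \<delta> where \<delta>: "\<delta> > 0" "\<And>d. norm d = 1 \<Longrightarrow> \<delta> \<le> max (infdist d K) (infdist (- d) K)"
    using closed_pointed_cone_sphere_gap[OF assms(2) convex_cone_nonempty[OF assms(1)] assms(3)]
    by blast
  have "norm v \<le> t * (norm w / \<delta>)" if v: "0 \<le> t" "t *\<^sub>R w - v \<in> K" "t *\<^sub>R w + v \<in> K" for t v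
  proof (cases "v = 0")
    case False
    define L where "L = norm v"
    define d where "d = (1 / L) *\<^sub>R v"
    have L: "L > 0" "norm d = 1"
      using False by (auto simp: L_def d_def)
    have "(1 / L) *\<^sub>R (t *\<^sub>R w + v) \<in> K" "(1 / L) *\<^sub>R (t *\<^sub>R w - v) \<in> K"
      using v L(1) by (auto intro: convex_cone_scaleR[OF assms(1)])
    then have "infdist d K \<le> t * norm w / L" "infdist (- d) K \<le> t * norm w / L"
      using infdist_le[of "(1 / L) *\<^sub>R (t *\<^sub>R w + v)" K d]
        infdist_le[of "(1 / L) *\<^sub>R (t *\<^sub>R w - v)" K "- d"] L(1) \<open>0 \<le> t\<close>
      by (auto simp: d_def dist_norm scaleR_add_right scaleR_diff_right)
    then have "\<delta> \<le> t * norm w / L"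
      using \<delta>(2)[OF L(2)] by linarith
    then show ?thesis
      using \<delta>(1) L(1) by (simp add: L_def field_simps)
  qed (use \<delta>(1) v(1) in simp)
  then show ?thesis
    using that by blast
qed

lemma cone_contraction_tendsto_zero:
  fixes K :: "(real^'n) set"
  assumes K: "convex_cone K" "closed K" "K \<inter> uminus ` K = {0}"
    and w: "w \<in> interior K" and \<theta>: "0 \<le> \<theta>" "\<theta> < 1"
    and R: "\<And>k. K_nonneg K (R k)" "\<And>k. \<theta> *\<^sub>R w - R k *v w \<in> K"
    and z: "\<And>k. z (Suc k) = R k *v z k"
  shows "z \<longlonglongrightarrow> 0"
proof -
  obtain c where c: "c > 1" "c *\<^sub>R w - z 0 \<in> K" "c *\<^sub>R w + z 0 \<in> K"
    using interior_convex_cone_absorbs[OF K(1) w] .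
  have interval: "(c * \<theta> ^ k) *\<^sub>R w - z k \<in> K \<and> (c * \<theta> ^ k) *\<^sub>R w + z k \<in> K" for k
  proof (induct k)
    case (Suc k)
    let ?c = "c * \<theta> ^ k"
    have "?c \<ge> 0"
      using c(1) \<theta>(1) by simp
    have "(c * \<theta> ^ Suc k) *\<^sub>R w - z (Suc k) = ?c *\<^sub>R (\<theta> *\<^sub>R w - R k *v w) + R k *v (?c *\<^sub>R w - z k)"
      "(c * \<theta> ^ Suc k) *\<^sub>R w + z (Suc k) = ?c *\<^sub>R (\<theta> *\<^sub>R w - R k *v w) + R k *v (?c *\<^sub>R w + z k)"
      by (simp_all add: z matrix_vector_mult_diff_distrib matrix_vector_right_distrib
          matrix_vector_mult_scaleR algebra_simps)
    with Suc \<open>?c \<ge> 0\<close> show ?case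
      using K_nonnegD[OF R(1)] R(2)
      by (auto intro!: convex_cone_add[OF K(1)] convex_cone_scaleR[OF K(1)])
  qed (use c in simp)
  obtain C where C: "\<And>t v. 0 \<le> t \<Longrightarrow> t *\<^sub>R w - v \<in> K \<Longrightarrow> t *\<^sub>R w + v \<in> K \<Longrightarrow> norm v \<le> t * C"
    using pointed_cone_order_interval_bounded[OF K] by blast
  have "\<forall>\<^sub>F k in sequentially. norm (z k) \<le> c * \<theta> ^ k * C"
    using C interval c(1) \<theta>(1) by simp
  moreover have "(\<lambda>k. \<theta> ^ k) \<longlonglongrightarrow> 0"
    using \<theta> by (intro LIMSEQ_power_zero) simp
  then have "(\<lambda>k. c * \<theta> ^ k * C) \<longlonglongrightarrow> 0"
    by (intro tendsto_mult_left_zero tendsto_mult_right_zero)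
  ultimately show ?thesis
    by (rule Lim_null_comparison)
qed

section \<open>Splittings\<close>

lemma K_regular_imp_weak_regular_II:
  "K_regular_splitting K A U V \<Longrightarrow> K_weak_regular_splitting_II K A U V"
  unfolding K_regular_splitting_def K_weak_regular_splitting_II_def by (auto intro: K_nonneg_mult)

lemma weak_regular_II_inverse_ge:
  assumes K: "convex_cone K" "closed K" and "invertible A"
    and split: "K_weak_regular_splitting_II K A U V" "convergent_splitting U V"
    and "v \<in> K"
  shows "U *v (matrix_inv A *v v) - v \<in> K"
proof -
  define Ui where "Ui = matrix_inv U"
  have A: "A = U - V" and "invertible U" and X: "K_nonneg K (V ** Ui)"
    using split(1) by (simp_all add: K_weak_regular_splitting_II_def Ui_def)
  then have U: "U ** Ui = mat 1" "Ui ** U = mat 1"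
    by (simp_all add: Ui_def matrix_inv_right matrix_inv_left)
  have "V ** Ui = U ** (Ui ** V) ** Ui"
    by (simp add: U(1) matrix_mul_assoc)
  moreover have "(\<lambda>k. matpow (Ui ** V) k) \<longlonglongrightarrow> 0"
    using split(2) by (simp add: convergent_splitting_def Ui_def matpow_tendsto_zero)
  ultimately have "(\<lambda>k. matpow (V ** Ui) k) \<longlonglongrightarrow> 0"
    by (simp add: matpow_similar_tendsto_zero U)
  moreover have "matrix_inv (mat 1 - V ** Ui) = U ** matrix_inv A"
  proof (rule matrix_inv_unique)
    have "mat 1 - V ** Ui = A ** Ui"
      by (simp add: A U(1) matrix_diff_rdistrib)
    moreover have "U ** matrix_inv A ** (A ** Ui) = U ** (matrix_inv A ** A) ** Ui"
      by (simp only: matrix_mul_assoc)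
    ultimately show "U ** matrix_inv A ** (mat 1 - V ** Ui) = mat 1"
      by (simp add: matrix_inv_left[OF \<open>invertible A\<close>] U(1))
  qed
  ultimately show ?thesis
    using matrix_inv_id_minus_ge[OF K X _ \<open>v \<in> K\<close>] by (simp add: matrix_vector_mul_assoc)
qed

section \<open>The two-stage iteration\<close>

text \<open>For \<open>Q = G F\<inverse>\<close> and \<open>W = V F\<inverse>\<close> this is \<open>F T\<^sub>s F\<inverse>\<close>, where
  \<open>T\<^sub>s = (F\<inverse>G)\<^sup>s + (\<Sum>j<s. (F\<inverse>G)\<^sup>j) F\<inverse>V\<close> is the iteration matrix of a step with
  \<open>s\<close> inner iterations.\<close>
definition two_stage_matrix :: "real^'n^'n \<Rightarrow> real^'n^'n \<Rightarrow> nat \<Rightarrow> real^'n^'n" where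
  "two_stage_matrix Q W s = matpow Q s + (\<Sum>j<s. matpow Q j) ** W"

lemma K_nonneg_two_stage_matrix:
  "convex_cone K \<Longrightarrow> K_nonneg K Q \<Longrightarrow> K_nonneg K W \<Longrightarrow> K_nonneg K (two_stage_matrix Q W s)"
  unfolding two_stage_matrix_def
  by (intro K_nonneg_add K_nonneg_mult K_nonneg_sum K_nonneg_matpow)

lemma id_minus_two_stage_matrix:
  "mat 1 - two_stage_matrix Q W s = (\<Sum>j<s. matpow Q j) ** (mat 1 - Q - W)"
proof -
  have "mat 1 - two_stage_matrix Q W s = (mat 1 - matpow Q s) - (\<Sum>j<s. matpow Q j) ** W"
    by (simp add: two_stage_matrix_def)
  also have "\<dots> = (\<Sum>j<s. matpow Q j) ** (mat 1 - Q - W)"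
    by (simp only: matrix_diff_ldistrib[of _ "mat 1 - Q" W] sum_matpow_mult_id_minus)
  finally show ?thesis .
qed

lemma two_stage_matrix_decrease:
  assumes "convex_cone K" "K_nonneg K Q" "(mat 1 - Q - W) *v w = e" "e \<in> K" "s \<ge> 1"
  shows "w - e - two_stage_matrix Q W s *v w \<in> K"
proof -
  obtain r where s: "s = Suc r"
    using \<open>s \<ge> 1\<close> by (cases s) auto
  have "w - two_stage_matrix Q W s *v w = (\<Sum>j<s. matpow Q j *v e)"
    using id_minus_two_stage_matrix[of Q W s] assms(3)
    by (metis matrix_vector_mul_assoc matrix_vector_mul_lid matrix_vector_mult_diff_rdistrib
        matrix_vector_sum_rdistrib)
  also have "\<dots> = e + (\<Sum>j<r. matpow Q (Suc j) *v e)"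
    unfolding s sum.lessThan_Suc_shift by simp
  finally have "w - e - two_stage_matrix Q W s *v w = (\<Sum>j<r. matpow Q (Suc j) *v e)"
    by (simp add: algebra_simps)
  then show ?thesis
    using assms(1,4) K_nonneg_matpow[OF assms(2)]
    by (simp add: K_nonnegD convex_cone_sum del: matpow.simps)
qed

lemma nested_splitting_inverse_ge:
  assumes K: "convex_cone K" "closed K" and "invertible A"
    and outer: "K_regular_splitting K A U V" "convergent_splitting U V"
    and inner: "K_weak_regular_splitting_II K U F G" "convergent_splitting F G"
    and "v \<in> K"
  shows "F *v (matrix_inv A *v v) - v \<in> K"
proof -
  define u where "u = U *v (matrix_inv A *v v)"
  have "u - v \<in> K"
    unfolding u_def using K \<open>invertible A\<close> K_regular_imp_weak_regular_II[OF outer(1)] outer(2)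
      \<open>v \<in> K\<close> by (rule weak_regular_II_inverse_ge)
  then have "u \<in> K"
    using convex_cone_add[OF K(1) _ \<open>v \<in> K\<close>] by fastforce
  have "invertible U"
    using outer(1) by (simp add: K_regular_splitting_def)
  have "F *v (matrix_inv U *v u) - u \<in> K"
    using K \<open>invertible U\<close> inner \<open>u \<in> K\<close> by (rule weak_regular_II_inverse_ge)
  moreover have "matrix_inv U *v u = matrix_inv A *v v"
    by (simp add: u_def matrix_vector_mul_assoc matrix_mul_assoc matrix_inv_left[OF \<open>invertible U\<close>])
  ultimately show ?thesis
    using convex_cone_add[OF K(1) _ \<open>u - v \<in> K\<close>] by fastforce
qed

lemma two_stage_error_step:
  fixes F G U V :: "real^'n^'n"
  assumes "invertible F" "U = F - G" "(U - V) *v xs = b"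
  shows "F *v (matpow (matrix_inv F ** G) s *v x
            + (\<Sum>j<s. matpow (matrix_inv F ** G) j *v (matrix_inv F *v (V *v x + b))) - xs)
       = two_stage_matrix (G ** matrix_inv F) (V ** matrix_inv F) s *v (F *v (x - xs))"
proof -
  define Fi where "Fi = matrix_inv F"
  define P where "P = Fi ** G"
  define S where "S = (\<Sum>j<s. matpow P j)"
  have F: "F ** Fi = mat 1" "Fi ** F = mat 1"
    using assms(1) by (simp_all add: Fi_def matrix_inv_right matrix_inv_left)
  have sum_eq: "(\<Sum>j<s. matpow P j *v (Fi *v y)) = S *v (Fi *v y)" for y
    by (simp add: S_def matrix_vector_sum_rdistrib)
  have "U *v xs - V *v xs = b"
    using assms(3) by (simp add: matrix_vector_mult_diff_rdistrib)
  then have fixed: "V *v xs + b = U *v xs"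
    by (simp add: diff_eq_eq add.commute)
  have "Fi ** U = mat 1 - P"
    by (simp add: assms(2) P_def matrix_diff_ldistrib F)
  then have "S *v (Fi *v (V *v xs + b)) = (S ** (mat 1 - P)) *v xs"
    by (simp add: fixed matrix_vector_mul_assoc)
  also have "\<dots> = xs - matpow P s *v xs"
    by (simp add: S_def sum_matpow_mult_id_minus matrix_vector_mult_diff_rdistrib)
  finally have "matpow P s *v x + S *v (Fi *v (V *v x + b)) - xs
      = matpow P s *v (x - xs) + S *v (Fi *v (V *v (x - xs)))"
    by (simp add: matrix_vector_right_distrib matrix_vector_mult_diff_distrib algebra_simps)
  moreover have similar: "F ** matpow P j ** Fi = matpow (G ** Fi) j" for j
    using matpow_similar[OF F, of P j] by (simp add: P_def matrix_mul_assoc F(1))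
  then have "F ** matpow P s = matpow (G ** Fi) s ** F"
    by (metis F(2) matrix_mul_assoc matrix_mul_rid)
  moreover have "F ** S ** Fi ** V = (\<Sum>j<s. matpow (G ** Fi) j) ** V"
    by (simp add: S_def matrix_sum_ldistrib matrix_sum_rdistrib similar)
  moreover have "two_stage_matrix (G ** Fi) (V ** Fi) s ** F
      = matpow (G ** Fi) s ** F + (\<Sum>j<s. matpow (G ** Fi) j) ** V"
    by (simp add: two_stage_matrix_def matrix_add_rdistrib F(2) flip: matrix_mul_assoc)
  ultimately show ?thesis
    unfolding sum_eq Fi_def[symmetric] P_def[symmetric]
    by (simp add: matrix_vector_right_distrib matrix_vector_mul_assoc matrix_mul_assoc
        matrix_vector_mult_add_rdistrib)
qed

lemma two_stage_error_tendsto_zero: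
  fixes K :: "(real^'n) set"
  assumes K: "proper_cone K" and QW: "K_nonneg K Q" "K_nonneg K W"
    and e: "e \<in> interior K" and w: "w - e \<in> K" "(mat 1 - Q - W) *v w = e"
    and s: "\<And>k. s k \<ge> 1" and z: "\<And>k. z (Suc k) = two_stage_matrix Q W (s k) *v z k"
  shows "z \<longlonglongrightarrow> 0"
proof -
  have cone: "convex_cone K" "closed K" "K \<inter> uminus ` K = {0}"
    using K by (simp_all add: proper_cone_imp_convex_cone proper_cone_def)
  have "e \<in> K"
    using e interior_subset by blast
  obtain c where c: "c > 1" "c *\<^sub>R e - w \<in> K"
    using interior_convex_cone_absorbs[OF cone(1) e] by blast
  define \<theta> where "\<theta> = 1 - 1 / c"
  have \<theta>: "0 \<le> \<theta>" "\<theta> < 1"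
    using c(1) by (simp_all add: \<theta>_def)
  have eq: "\<theta> *\<^sub>R w - two_stage_matrix Q W (s k) *v w
      = (w - e - two_stage_matrix Q W (s k) *v w) + (1 / c) *\<^sub>R (c *\<^sub>R e - w)" for k
    using c(1) by (simp add: \<theta>_def algebra_simps)
  have "w - e - two_stage_matrix Q W (s k) *v w \<in> K" for k
    using cone(1) QW(1) w(2) \<open>e \<in> K\<close> s by (rule two_stage_matrix_decrease)
  moreover have "(1 / c) *\<^sub>R (c *\<^sub>R e - w) \<in> K"
    using c cone(1) by (simp add: convex_cone_scaleR)
  ultimately have decrease: "\<theta> *\<^sub>R w - two_stage_matrix Q W (s k) *v w \<in> K" for k
    unfolding eq using cone(1) by (blast intro: convex_cone_add)
  have "w \<in> interior K"
    using interior_convex_cone_add[OF cone(1) e w(1)] by simp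
  with cone \<theta> show ?thesis
    using K_nonneg_two_stage_matrix[OF cone(1) QW] decrease z
    by (intro cone_contraction_tendsto_zero[where R = "\<lambda>k. two_stage_matrix Q W (s k)"])
qed

lemma id_minus_two_stage_splitting:
  fixes A U V F G :: "real^'n^'n"
  assumes "A = U - V" "U = F - G" "invertible F" "invertible A"
  shows "(mat 1 - G ** matrix_inv F - V ** matrix_inv F) *v (F *v (matrix_inv A *v e)) = e"
proof -
  have "mat 1 - G ** matrix_inv F - V ** matrix_inv F = A ** matrix_inv F"
    by (simp add: assms(1,2) matrix_diff_rdistrib matrix_inv_right[OF assms(3)])
  moreover have "A ** matrix_inv F ** F ** matrix_inv A = mat 1"
    by (metis assms(3,4) matrix_inv_left matrix_inv_right matrix_mul_assoc matrix_mul_rid)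
  ultimately show ?thesis
    by (simp add: matrix_vector_mul_assoc matrix_mul_assoc)
qed

theorem theorem3p5:
  fixes K :: "(real^'n) set"
    and A U V F G :: "real^'n^'n"
    and b :: "real^'n"
    and s :: "nat \<Rightarrow> nat"
    and x :: "nat \<Rightarrow> real^'n"
  assumes "proper_cone K"
    and "invertible A"
    and "K_regular_splitting K A U V" and "convergent_splitting U V"
    and "K_weak_regular_splitting_II K U F G" and "convergent_splitting F G"
    and "V ** matrix_inv F ** G = G ** matrix_inv F ** V"
    and "\<And>k. s k \<ge> 1"
    and "\<And>k. x (Suc k) = matpow (matrix_inv F ** G) (s k) *v x k
            + (\<Sum>j<s k. matpow (matrix_inv F ** G) j *v (matrix_inv F *v (V *v x k + b)))"
  shows "x \<longlonglongrightarrow> matrix_inv A *v b"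
proof -
  have K: "convex_cone K" "closed K"
    using assms(1) by (simp_all add: proper_cone_imp_convex_cone proper_cone_def)
  obtain e where e: "e \<in> interior K"
    using assms(1) by (auto simp: proper_cone_def)
  have A: "A = U - V" "K_nonneg K V"
    and U: "U = F - G" "invertible F" "K_nonneg K (matrix_inv F)" "K_nonneg K (G ** matrix_inv F)"
    using assms(3,5) by (simp_all add: K_regular_splitting_def K_weak_regular_splitting_II_def)
  define xs where "xs = matrix_inv A *v b"
  have "(U - V) *v xs = b"
    using matrix_inv_right[OF assms(2)] by (simp add: xs_def A(1) matrix_vector_mul_assoc)
  then have step: "F *v (x (Suc k) - xs)
      = two_stage_matrix (G ** matrix_inv F) (V ** matrix_inv F) (s k) *v (F *v (x k - xs))" for k
    unfolding assms(9) by (rule two_stage_error_step[OF U(2,1)])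
  have "F *v (matrix_inv A *v e) - e \<in> K"
    using e interior_subset by (blast intro: nested_splitting_inverse_ge[OF K assms(2-6)])
  then have "(\<lambda>k. F *v (x k - xs)) \<longlonglongrightarrow> 0"
    using id_minus_two_stage_splitting[OF A(1) U(1,2) assms(2)] assms(8) step
    by (rule two_stage_error_tendsto_zero[where z = "\<lambda>k. F *v (x k - xs)",
          OF assms(1) U(4) K_nonneg_mult[OF A(2) U(3)] e])
  then have "(\<lambda>k. matrix_inv F *v (F *v (x k - xs)) + xs) \<longlonglongrightarrow> matrix_inv F *v 0 + xs"
    by (intro tendsto_add tendsto_matrix_vector_mult tendsto_const)
  then show ?thesis
    by (simp add: matrix_vector_mul_assoc matrix_inv_left U(2) xs_def)
qed

end
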